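(* Let $K\subset\mathbb{R}^{2d}\setminus D_0$ be compact. Then there exist $\sqrt2<r<r'$, constants $c_1,c_2,\epsilon>0$ and a function $R\in C_0^\infty(\mathbb{R}^{2d})$ vanishing in a neighbourhood of $D_0$ such that, as symmetric $2d\times 2d$ matrices, $$\nabla^2R(\tilde x)\ge c_1 1_K(\tilde x)-c_2 1_{C_{r,r'}\setminus D_\epsilon}(\tilde x)\quad\text{for all }\tilde x\in\mathbb{R}^{2d}.$$
   Context: $\tilde x=(x_1,x_2)\in\mathbb{R}^{2d}$ with $x_i\in\mathbb{R}^d$; $D_\epsilon=\{\tilde x:|x_1-x_2|\le\epsilon\}$ (so $D_0$ is the diagonal); $C_{r,r'}=\{\tilde x:r\le|\tilde x|\le r'\}$; $\nabla^2R$ is the Hessian, and the scalars on the right are multiples of the identity matrix. *)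

theory Defs
  imports "HOL-Analysis.Analysis"
begin

definition dpart :: "'a::real_normed_vector \<Rightarrow> ('a \<Rightarrow> real) \<Rightarrow> 'a \<Rightarrow> real" where
  "dpart v f x = deriv (\<lambda>t. f (x + t *\<^sub>R v)) 0"

fun iter_dpart :: "'a::real_normed_vector list \<Rightarrow> ('a \<Rightarrow> real) \<Rightarrow> 'a \<Rightarrow> real" where
  "iter_dpart [] f = f"
| "iter_dpart (v # vs) f = dpart v (iter_dpart vs f)"

definition smooth_fun :: "('a::euclidean_space \<Rightarrow> real) \<Rightarrow> bool" where
  "smooth_fun f \<longleftrightarrow>
     (\<forall>vs. set vs \<subseteq> Basis \<longrightarrow>
        continuous_on UNIV (iter_dpart vs f) \<and>
        (\<forall>i\<in>Basis. \<forall>x. (\<lambda>t. iter_dpart vs f (x + t *\<^sub>R i)) differentiable (at 0)))"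

definition hess_entry :: "('a::euclidean_space \<Rightarrow> real) \<Rightarrow> 'a \<Rightarrow> 'a \<Rightarrow> 'a \<Rightarrow> real" where
  "hess_entry f x i j = dpart i (dpart j f) x"

definition hess_ge :: "('a::euclidean_space \<Rightarrow> real) \<Rightarrow> 'a \<Rightarrow> real \<Rightarrow> bool" where
  "hess_ge f x s \<longleftrightarrow>
     (\<forall>v::'a. (\<Sum>i\<in>Basis. \<Sum>j\<in>Basis. (v \<bullet> i) * hess_entry f x i j * (v \<bullet> j)) \<ge> s * (norm v)\<^sup>2)"

definition Dset :: "real \<Rightarrow> ('d::euclidean_space \<times> 'd) set" where
  "Dset e = {(x1, x2). norm (x1 - x2) \<le> e}"

definition Cann :: "real \<Rightarrow> real \<Rightarrow> ('a::real_normed_vector) set" where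
  "Cann r r' = {x. r \<le> norm x \<and> norm x \<le> r'}"

end

theory Submission
  imports Defs "HOL-Computational_Algebra.Polynomial"
begin

text \<open>Write \<open>S = |x\<^sub>1 - x\<^sub>2|\<^sup>2\<close> and \<open>Q = |x\<^sub>1 + x\<^sub>2|\<^sup>2\<close>, and let \<open>h\<close> be a flat function of \<open>S\<close>
  vanishing for \<open>S \<le> d\<close>, where \<open>d\<close> is smaller than the minimum of \<open>S\<close> on \<open>K\<close>. For
  \<open>F = h(S) + h(S)\<^sup>2 Q\<close>, on the ball \<open>|x| < 2\<close> the Hessian satisfies
  \<open>\<nabla>\<^sup>2F[v,v] \<ge> h'(S) |v\<^sub>1 - v\<^sub>2|\<^sup>2 + h(S)\<^sup>2 |v\<^sub>1 + v\<^sub>2|\<^sup>2\<close>: the terms with \<open>h''\<close> are nonnegative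
  there, and the mixed term is absorbed because \<open>h'\<close> is small. This is a positive multiple of
  \<open>|v|\<^sup>2\<close> wherever \<open>S > d\<close>, hence on the part of \<open>K\<close> in that ball.

  Multiplying \<open>F\<close> by a smooth cutoff of \<open>|x|\<^sup>2\<close> that is 1 on the ball of radius 2 and 0 outside
  a ball containing \<open>K\<close> gives \<open>R\<close>. It vanishes where \<open>S < d\<close>, in particular on a neighbourhood
  \<open>D\<^sub>\<epsilon>\<close> of the diagonal; on the compact annulus between the two balls its Hessian is merely
  bounded below, and off \<open>D\<^sub>\<epsilon>\<close> this (together with the part of \<open>K\<close> in the annulus) is paid for by
  the \<open>c\<^sub>2\<close> term.

  Smoothness holds because everything is built from polynomials, inverses and
  \<open>t \<mapsto> p(1/t) exp(-1/t)\<close>, a class of functions closed under directional derivatives.\<close>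

definition flat_exp :: "real poly \<Rightarrow> real \<Rightarrow> real" where
  "flat_exp p t = (if 0 < t then poly p (inverse t) * exp (- inverse t) else 0)"

text \<open>\<open>(p(1/t) exp(-1/t))' = (1/t)\<^sup>2 (p - p')(1/t) exp(-1/t)\<close>\<close>
definition flat_exp_dpoly :: "real poly \<Rightarrow> real poly" where
  "flat_exp_dpoly p = [:0, 0, 1:] * (p - pderiv p)"

lemma poly_times_exp_neg_tendsto_0: "((\<lambda>y. poly p y * exp (- y)) \<longlongrightarrow> (0::real)) at_top"
proof -
  have "((\<lambda>y. \<Sum>i\<le>degree p. coeff p i * (y ^ i / exp y))
      \<longlongrightarrow> (\<Sum>i\<le>degree p. coeff p i * 0)) at_top"
    by (intro tendsto_sum tendsto_mult tendsto_const tendsto_power_div_exp_0)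
  moreover have "(\<Sum>i\<le>degree p. coeff p i * (y ^ i / exp y)) = poly p y * exp (- y)" for y :: real
    by (simp add: poly_altdef exp_minus divide_inverse sum_distrib_right mult.assoc)
  ultimately show ?thesis by simp
qed

lemma flat_exp_has_real_derivative_pos:
  assumes "0 < t"
  shows "(flat_exp p has_real_derivative flat_exp (flat_exp_dpoly p) t) (at t)"
proof -
  have inv: "(inverse has_real_derivative - (inverse t ^ 2)) (at t)"
    using DERIV_inverse[of t] assms by (simp add: power2_eq_square)
  have "((\<lambda>s. poly p (inverse s) * exp (- inverse s)) has_real_derivative
      poly (pderiv p) (inverse t) * - (inverse t ^ 2) * exp (- inverse t)
      + exp (- inverse t) * (inverse t ^ 2) * poly p (inverse t)) (at t)"
    using DERIV_mult[OF DERIV_chain2[OF poly_DERIV inv]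
        DERIV_chain2[OF DERIV_exp DERIV_minus[OF inv]]] by simp
  also have "poly (pderiv p) (inverse t) * - (inverse t ^ 2) * exp (- inverse t)
      + exp (- inverse t) * (inverse t ^ 2) * poly p (inverse t) = flat_exp (flat_exp_dpoly p) t"
    using assms by (simp add: flat_exp_def flat_exp_dpoly_def algebra_simps power2_eq_square)
  finally show ?thesis
    by (rule has_field_derivative_transform_within_open[of _ _ _ "{0<..}"])
      (use assms in \<open>auto simp: flat_exp_def\<close>)
qed

text \<open>The difference quotient at 0 is \<open>q(1/y) exp(-1/y)\<close> with \<open>q(z) = z p(z)\<close>, which tends
  to 0 as \<open>y \<rightarrow> 0\<^sup>+\<close>.\<close>
lemma flat_exp_has_real_derivative_0: "(flat_exp p has_real_derivative 0) (at 0)"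
proof -
  have "((\<lambda>y. (flat_exp p y - flat_exp p 0) / (y - 0)) \<longlongrightarrow> 0) (at 0)"
  proof (rule filterlim_split_at)
    show "((\<lambda>y. (flat_exp p y - flat_exp p 0) / (y - 0)) \<longlongrightarrow> 0) (at_left 0)"
      by (rule tendsto_eventually) (auto simp: eventually_at_filter flat_exp_def)
  next
    have "((\<lambda>y. poly ([:0,1:] * p) (inverse y) * exp (- inverse y)) \<longlongrightarrow> (0::real))
        (at_right 0)"
      by (rule filterlim_compose[OF poly_times_exp_neg_tendsto_0 filterlim_inverse_at_top_right])
    then show "((\<lambda>y. (flat_exp p y - flat_exp p 0) / (y - 0)) \<longlongrightarrow> 0) (at_right 0)"
      by (rule Lim_transform_eventually)
        (auto simp: eventually_at_filter flat_exp_def field_simps)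
  qed
  then show ?thesis by (simp add: has_field_derivative_iff flat_exp_def)
qed

lemma flat_exp_has_real_derivative:
  "(flat_exp p has_real_derivative flat_exp (flat_exp_dpoly p) t) (at t)"
proof (cases t "0::real" rule: linorder_cases)
  case less
  have "((\<lambda>_. 0) has_real_derivative flat_exp (flat_exp_dpoly p) t) (at t)"
    using less by (simp add: flat_exp_def)
  then show ?thesis
    by (rule has_field_derivative_transform_within_open[of _ _ _ "{..<0}"])
      (use less in \<open>auto simp: flat_exp_def\<close>)
next
  case equal
  then show ?thesis using flat_exp_has_real_derivative_0 by (simp add: flat_exp_def)
next
  case greater
  then show ?thesis by (rule flat_exp_has_real_derivative_pos)
qed

lemma continuous_on_flat_exp: "continuous_on UNIV (flat_exp p)"
  by (metis DERIV_isCont continuous_at_imp_continuous_on flat_exp_has_real_derivative)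

text \<open>A class of functions that is closed under directional derivatives, so that all its
  members are \<open>C\<^sup>\<infinity>\<close>.\<close>
inductive smooth_expr :: "('a::euclidean_space \<Rightarrow> real) \<Rightarrow> bool" where
  const: "smooth_expr (\<lambda>x. c)"
| linear: "bounded_linear l \<Longrightarrow> smooth_expr l"
| inner_square: "bounded_linear (L :: 'a \<Rightarrow> 'a) \<Longrightarrow> smooth_expr (\<lambda>x. L x \<bullet> L x)"
| add: "smooth_expr f \<Longrightarrow> smooth_expr g \<Longrightarrow> smooth_expr (\<lambda>x. f x + g x)"
| mult: "smooth_expr f \<Longrightarrow> smooth_expr g \<Longrightarrow> smooth_expr (\<lambda>x. f x * g x)"
| inverse: "smooth_expr f \<Longrightarrow> (\<And>x. 0 < f x) \<Longrightarrow> smooth_expr (\<lambda>x. inverse (f x))"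
| flat_exp: "smooth_expr f \<Longrightarrow> smooth_expr (\<lambda>x. flat_exp p (f x))"

lemma smooth_expr_cong: "smooth_expr f \<Longrightarrow> (\<And>x. f x = g x) \<Longrightarrow> smooth_expr g"
  by (metis ext)

lemma smooth_expr_cmult: "smooth_expr f \<Longrightarrow> smooth_expr (\<lambda>x. c * f x)"
  using smooth_expr.mult[OF smooth_expr.const] by blast

lemma smooth_expr_diff: "smooth_expr f \<Longrightarrow> smooth_expr g \<Longrightarrow> smooth_expr (\<lambda>x. f x - g x)"
  by (rule smooth_expr_cong[OF smooth_expr.add[OF _ smooth_expr_cmult[of g "-1"]]]) auto

lemma smooth_expr_divide:
  "smooth_expr f \<Longrightarrow> smooth_expr g \<Longrightarrow> (\<And>x. 0 < g x) \<Longrightarrow> smooth_expr (\<lambda>x. f x / g x)"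
  by (rule smooth_expr_cong[OF smooth_expr.mult[OF _ smooth_expr.inverse]])
    (auto simp: divide_inverse)

lemma continuous_on_smooth_expr: "smooth_expr f \<Longrightarrow> continuous_on UNIV f"
proof (induction rule: smooth_expr.induct)
  case (linear l)
  then show ?case by (rule linear_continuous_on)
next
  case (inner_square L)
  then show ?case by (intro continuous_intros linear_continuous_on)
next
  case (inverse f)
  then show ?case by (intro continuous_on_inverse) (auto simp: less_imp_neq[symmetric])
qed (auto intro!: continuous_intros continuous_on_compose2[OF continuous_on_flat_exp])

lemma smooth_expr_directional_derivative:
  assumes "smooth_expr f"
  obtains f' where "smooth_expr f'" "\<And>x. ((\<lambda>t. f (x + t *\<^sub>R v)) has_real_derivative f' x) (at 0)"
proof -
  from assms
  have "\<exists>f'. smooth_expr f' \<and> (\<forall>x. ((\<lambda>t. f (x + t *\<^sub>R v)) has_real_derivative f' x) (at 0))"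
  proof (induction rule: smooth_expr.induct)
    case (const c)
    show ?case by (auto intro!: exI[of _ "\<lambda>x. 0"] smooth_expr.const)
  next
    case (linear l)
    have "(\<lambda>t. l (x + t *\<^sub>R v)) = (\<lambda>t. l x + t * l v)" for x
      using linear by (simp add: linear_simps)
    then show ?case
      by (auto intro!: exI[of _ "\<lambda>x. l v"] smooth_expr.const derivative_eq_intros)
  next
    case (inner_square L)
    have "(\<lambda>t. L (x + t *\<^sub>R v) \<bullet> L (x + t *\<^sub>R v))
        = (\<lambda>t. L x \<bullet> L x + 2 * t * (L x \<bullet> L v) + t\<^sup>2 * (L v \<bullet> L v))" for x
      using inner_square
      by (auto simp: linear_simps inner_add inner_commute power2_eq_square algebra_simps)
    moreover have "smooth_expr (\<lambda>x. 2 * (L x \<bullet> L v))"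
      using inner_square by (intro smooth_expr.linear bounded_linear_intros
          bounded_linear_compose[OF bounded_linear_inner_left])
    ultimately show ?case
      by (auto intro!: exI[of _ "\<lambda>x. 2 * (L x \<bullet> L v)"] derivative_eq_intros)
  next
    case (add f g)
    then obtain f' g' where "smooth_expr f'" "smooth_expr g'"
      "\<And>x. ((\<lambda>t. f (x + t *\<^sub>R v)) has_real_derivative f' x) (at 0)"
      "\<And>x. ((\<lambda>t. g (x + t *\<^sub>R v)) has_real_derivative g' x) (at 0)" by blast
    then show ?case by (intro exI[of _ "\<lambda>x. f' x + g' x"] conjI allI smooth_expr.add DERIV_add)
  next
    case (mult f g)
    then obtain f' g' where "smooth_expr f'" "smooth_expr g'"
      and f': "\<And>x. ((\<lambda>t. f (x + t *\<^sub>R v)) has_real_derivative f' x) (at 0)"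
      and g': "\<And>x. ((\<lambda>t. g (x + t *\<^sub>R v)) has_real_derivative g' x) (at 0)" by blast
    then show ?case
      using mult DERIV_mult[OF f' g']
      by (intro exI[of _ "\<lambda>x. f' x * g x + f x * g' x"] conjI allI smooth_expr.add
          smooth_expr.mult)
        (auto simp: mult.commute)
  next
    case (inverse f)
    then obtain f' where "smooth_expr f'"
      and f': "\<And>x. ((\<lambda>t. f (x + t *\<^sub>R v)) has_real_derivative f' x) (at 0)" by blast
    moreover have "f x \<noteq> 0" for x using inverse(2)[of x] by simp
    ultimately show ?case
      using inverse DERIV_inverse_fun[OF f']
      by (intro exI[of _ "\<lambda>x. - 1 * f' x * inverse (f x) * inverse (f x)"] conjI allI
          smooth_expr.mult smooth_expr.const smooth_expr.inverse)
        (auto simp: power2_eq_square mult.assoc)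
  next
    case (flat_exp f p)
    then obtain f' where "smooth_expr f'"
      and f': "\<And>x. ((\<lambda>t. f (x + t *\<^sub>R v)) has_real_derivative f' x) (at 0)" by blast
    then show ?case
      using flat_exp DERIV_chain2[OF flat_exp_has_real_derivative f']
      by (intro exI[of _ "\<lambda>x. flat_exp (flat_exp_dpoly p) (f x) * f' x"] conjI allI
          smooth_expr.mult smooth_expr.flat_exp) auto
  qed
  then show thesis using that by blast
qed

lemma smooth_expr_iter_dpart: "smooth_expr f \<Longrightarrow> smooth_expr (iter_dpart vs f)"
proof (induction vs)
  case (Cons v vs)
  then obtain g where "smooth_expr g"
    and g: "\<And>x. ((\<lambda>t. iter_dpart vs f (x + t *\<^sub>R v)) has_real_derivative g x) (at 0)"
    using smooth_expr_directional_derivative by blast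
  moreover have "dpart v (iter_dpart vs f) = g"
    by (rule ext) (simp add: dpart_def DERIV_imp_deriv[OF g])
  ultimately show ?case by simp
qed simp

lemma smooth_fun_if_smooth_expr: "smooth_expr f \<Longrightarrow> smooth_fun f"
  unfolding smooth_fun_def
proof (intro allI impI conjI ballI)
  fix vs :: "'a list" and v x
  assume "smooth_expr f"
  then have f: "smooth_expr (iter_dpart vs f)" by (rule smooth_expr_iter_dpart)
  then show "continuous_on UNIV (iter_dpart vs f)" by (rule continuous_on_smooth_expr)
  obtain g where "((\<lambda>t. iter_dpart vs f (x + t *\<^sub>R v)) has_real_derivative g x) (at 0)"
    using smooth_expr_directional_derivative[OF f, where v=v] by blast
  then show "(\<lambda>t. iter_dpart vs f (x + t *\<^sub>R v)) differentiable (at 0)"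
    using real_differentiable_def by blast
qed

lemma dpart_cong_open:
  assumes "open U" "\<And>y. y \<in> U \<Longrightarrow> f y = g y" "x \<in> U"
  shows "dpart v f x = dpart v g x"
proof -
  have "open ((\<lambda>t::real. x + t *\<^sub>R v) -` U)"
    by (rule continuous_open_vimage) (auto intro!: continuous_intros assms(1))
  then have "eventually (\<lambda>t. x + t *\<^sub>R v \<in> U) (nhds 0)"
    using eventually_nhds_in_open assms(3) by fastforce
  then have "eventually (\<lambda>t. f (x + t *\<^sub>R v) = g (x + t *\<^sub>R v)) (nhds 0)"
    by eventually_elim (use assms(2) in auto)
  then show ?thesis unfolding dpart_def by (rule deriv_cong_ev) simp
qed

lemma hess_entry_cong_open:
  assumes "open U" "\<And>y. y \<in> U \<Longrightarrow> f y = g y" "x \<in> U"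
  shows "hess_entry f x i j = hess_entry g x i j"
  unfolding hess_entry_def
  by (rule dpart_cong_open[OF assms(1) _ assms(3)]) (rule dpart_cong_open[OF assms(1,2)])

lemma hess_ge_mono:
  assumes "hess_ge f x s" "s' \<le> s"
  shows "hess_ge f x s'"
  unfolding hess_ge_def
proof
  fix v :: 'a
  have "s' * (norm v)\<^sup>2 \<le> s * (norm v)\<^sup>2"
    using assms(2) by (rule mult_right_mono) simp
  then show "s' * (norm v)\<^sup>2 \<le> (\<Sum>i\<in>Basis. \<Sum>j\<in>Basis. (v \<bullet> i) * hess_entry f x i j * (v \<bullet> j))"
    using assms(1) unfolding hess_ge_def by (meson order_trans)
qed

lemma hess_ge_if_vanishing_near:
  assumes "open U" "\<And>y. y \<in> U \<Longrightarrow> f y = 0" "x \<in> U" "s \<le> 0"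
  shows "hess_ge f x s"
proof -
  have "hess_entry f x i j = hess_entry (\<lambda>_. 0) x i j" for i j
    using assms by (intro hess_entry_cong_open[of U]) auto
  then have "hess_entry f x i j = 0" for i j
    by (simp add: hess_entry_def dpart_def)
  then show ?thesis
    using assms(4) by (simp add: hess_ge_def mult_nonpos_nonneg)
qed

lemma dpart_eq_if_has_derivative:
  assumes "(f has_derivative f') (at x)"
  shows "dpart v f x = f' v"
proof -
  have "((\<lambda>t::real. f (x + t *\<^sub>R v)) has_derivative (\<lambda>t. f' (t *\<^sub>R v))) (at 0)"
    by (rule has_derivative_compose[of "\<lambda>t. x + t *\<^sub>R v" "\<lambda>t. t *\<^sub>R v", simplified])
      (auto intro!: derivative_eq_intros assms)
  moreover have "(\<lambda>t. f' (t *\<^sub>R v)) = (*) (f' v)"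
    using has_derivative_linear[OF assms] by (auto simp: linear_cmul)
  ultimately show ?thesis
    unfolding dpart_def by (simp add: DERIV_imp_deriv has_field_derivative_def)
qed

lemma hess_quadratic_form_eq:
  fixes f :: "'a::euclidean_space \<Rightarrow> real"
  assumes f': "\<And>y. (f has_derivative f' y) (at y)"
    and f'': "\<And>w. ((\<lambda>y. f' y w) has_derivative (\<lambda>u. f'' u w)) (at x)"
    and f''_sym: "\<And>u w. f'' u w = f'' w u"
  shows "(\<Sum>i\<in>Basis. \<Sum>j\<in>Basis. (v \<bullet> i) * hess_entry f x i j * (v \<bullet> j)) = f'' v v"
proof -
  have "dpart j f = (\<lambda>y. f' y j)" for j
    by (rule ext) (rule dpart_eq_if_has_derivative[OF f'])
  then have hess: "hess_entry f x i j = f'' i j" for i j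
    unfolding hess_entry_def by (simp only: dpart_eq_if_has_derivative[OF f''])
  have expand: "(\<Sum>i\<in>Basis. (v \<bullet> i) * f'' i w) = f'' v w" for w
    using Linear_Algebra.linear_componentwise[OF has_derivative_linear[OF f''[of w]], of v 1]
    by (simp add: inner_real_def)
  have "(\<Sum>j\<in>Basis. (v \<bullet> i) * hess_entry f x i j * (v \<bullet> j)) = (v \<bullet> i) * f'' v i" for i
  proof -
    have "(\<Sum>j\<in>Basis. (v \<bullet> i) * hess_entry f x i j * (v \<bullet> j))
        = (v \<bullet> i) * (\<Sum>j\<in>Basis. (v \<bullet> j) * f'' j i)"
      by (simp add: hess sum_distrib_left f''_sym[of i] mult_ac)
    then show ?thesis by (simp add: expand)
  qed
  then have "(\<Sum>i\<in>Basis. \<Sum>j\<in>Basis. (v \<bullet> i) * hess_entry f x i j * (v \<bullet> j))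
      = (\<Sum>i\<in>Basis. (v \<bullet> i) * f'' i v)"
    by (simp add: f''_sym[of v])
  also have "\<dots> = f'' v v" by (rule expand)
  finally show ?thesis .
qed

lemma quadratic_form_ge_neg_abs_sum:
  fixes H :: "'a::euclidean_space \<Rightarrow> 'a \<Rightarrow> real"
  shows "(\<Sum>i\<in>Basis. \<Sum>j\<in>Basis. (v \<bullet> i) * H i j * (v \<bullet> j)) \<ge>
    - (\<Sum>i\<in>Basis. \<Sum>j\<in>Basis. \<bar>H i j\<bar>) * (norm v)\<^sup>2"
proof -
  have "- (\<bar>H i j\<bar> * (norm v)\<^sup>2) \<le> (v \<bullet> i) * H i j * (v \<bullet> j)"
    if "i \<in> Basis" "j \<in> Basis" for i j
  proof -
    have "\<bar>(v \<bullet> i) * H i j * (v \<bullet> j)\<bar> = \<bar>H i j\<bar> * (\<bar>v \<bullet> i\<bar> * \<bar>v \<bullet> j\<bar>)"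
      by (simp add: abs_mult)
    also have "\<dots> \<le> \<bar>H i j\<bar> * (norm v * norm v)"
      using that by (intro mult_left_mono mult_mono Basis_le_norm) auto
    finally show ?thesis by (simp add: power2_eq_square)
  qed
  then have "(\<Sum>i\<in>Basis. \<Sum>j\<in>Basis. - (\<bar>H i j\<bar> * (norm v)\<^sup>2))
      \<le> (\<Sum>i\<in>Basis. \<Sum>j\<in>Basis. (v \<bullet> i) * H i j * (v \<bullet> j))"
    by (intro sum_mono) auto
  then show ?thesis by (simp add: sum_negf sum_distrib_right)
qed

lemma smooth_fun_hess_ge_on_compact:
  assumes "smooth_fun f" "compact C"
  obtains M where "\<And>x. x \<in> C \<Longrightarrow> hess_ge f x (- M)"
proof -
  define H where "H x = (\<Sum>i\<in>Basis. \<Sum>j\<in>Basis. \<bar>hess_entry f x i j\<bar>)" for x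
  have hess_cont: "continuous_on UNIV (\<lambda>x. hess_entry f x i j)"
    if "i \<in> Basis" "j \<in> Basis" for i j
  proof -
    have "set [i, j] \<subseteq> Basis" using that by simp
    then have "continuous_on UNIV (iter_dpart [i, j] f)"
      using assms(1) unfolding smooth_fun_def by blast
    moreover have "iter_dpart [i, j] f = (\<lambda>x. hess_entry f x i j)"
      by (rule ext) (simp add: hess_entry_def)
    ultimately show ?thesis by simp
  qed
  have "continuous_on UNIV H"
    unfolding H_def[abs_def] by (intro continuous_intros hess_cont) auto
  then have "bounded (H ` C)"
    using assms(2) by (intro compact_imp_bounded compact_continuous_image)
      (auto intro: continuous_on_subset)
  then obtain M where M: "\<And>x. x \<in> C \<Longrightarrow> H x \<le> M"
    unfolding bounded_real by (meson abs_le_D1 image_eqI)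
  have "hess_ge f x (- M)" if "x \<in> C" for x
    unfolding hess_ge_def
  proof
    fix v :: 'a
    have "- M * (norm v)\<^sup>2 \<le> - H x * (norm v)\<^sup>2"
      using M[OF that] by (intro mult_right_mono) auto
    also have "\<dots> \<le> (\<Sum>i\<in>Basis. \<Sum>j\<in>Basis. (v \<bullet> i) * hess_entry f x i j * (v \<bullet> j))"
      unfolding H_def by (rule quadratic_form_ge_neg_abs_sum)
    finally show "- M * (norm v)\<^sup>2
        \<le> (\<Sum>i\<in>Basis. \<Sum>j\<in>Basis. (v \<bullet> i) * hess_entry f x i j * (v \<bullet> j))" .
  qed
  then show thesis by (rule that)
qed

lemma continuous_pos_on_compact_ge:
  fixes g :: "'a::metric_space \<Rightarrow> real"
  assumes "compact K" "continuous_on K g" "\<And>x. x \<in> K \<Longrightarrow> 0 < g x"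
  obtains \<mu> where "0 < \<mu>" "\<And>x. x \<in> K \<Longrightarrow> \<mu> \<le> g x"
proof (cases "K = {}")
  case False
  then obtain x0 where "x0 \<in> K" "\<And>y. y \<in> K \<Longrightarrow> g x0 \<le> g y"
    using continuous_attains_inf[OF assms(1) _ assms(2)] by blast
  then show thesis using that assms(3) by blast
qed (use that[of 1] in simp)

text \<open>The scalings by 16 and 256 make \<open>diag_bump' d \<le> 1/4096\<close> and \<open>diag_bump'' d s \<ge> 0\<close>
  for \<open>s - d \<le> 8\<close> (then \<open>1/t \<ge> 2\<close> for the argument \<open>t\<close> of \<open>flat_exp\<close>), which is what
  the Hessian estimate in the ball \<open>|x| < 2\<close> needs.\<close>
definition diag_bump :: "real \<Rightarrow> real \<Rightarrow> real" where
  "diag_bump d s = flat_exp 1 ((s - d) / 16) / 256"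

definition diag_bump' :: "real \<Rightarrow> real \<Rightarrow> real" where
  "diag_bump' d s = flat_exp (flat_exp_dpoly 1) ((s - d) / 16) / 4096"

definition diag_bump'' :: "real \<Rightarrow> real \<Rightarrow> real" where
  "diag_bump'' d s = flat_exp (flat_exp_dpoly (flat_exp_dpoly 1)) ((s - d) / 16) / 65536"

lemma diag_bump_has_real_derivative: "(diag_bump d has_real_derivative diag_bump' d s) (at s)"
proof -
  have "((\<lambda>s. flat_exp 1 ((s - d) / 16)) has_real_derivative
      flat_exp (flat_exp_dpoly 1) ((s - d) / 16) * (1 / 16)) (at s)"
    by (rule DERIV_chain2[OF flat_exp_has_real_derivative]) (auto intro!: derivative_eq_intros)
  then show ?thesis unfolding diag_bump_def diag_bump'_def
    by (auto intro!: derivative_eq_intros simp: field_simps)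
qed

lemma diag_bump'_has_real_derivative: "(diag_bump' d has_real_derivative diag_bump'' d s) (at s)"
proof -
  have "((\<lambda>s. flat_exp (flat_exp_dpoly 1) ((s - d) / 16)) has_real_derivative
      flat_exp (flat_exp_dpoly (flat_exp_dpoly 1)) ((s - d) / 16) * (1 / 16)) (at s)"
    by (rule DERIV_chain2[OF flat_exp_has_real_derivative]) (auto intro!: derivative_eq_intros)
  then show ?thesis unfolding diag_bump'_def diag_bump''_def
    by (auto intro!: derivative_eq_intros simp: field_simps)
qed

lemma continuous_on_diag_bump: "continuous_on UNIV (diag_bump d)"
  by (metis DERIV_isCont continuous_at_imp_continuous_on diag_bump_has_real_derivative)

lemma continuous_on_diag_bump': "continuous_on UNIV (diag_bump' d)"
  by (metis DERIV_isCont continuous_at_imp_continuous_on diag_bump'_has_real_derivative)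

lemma poly_flat_exp_dpoly_1: "poly (flat_exp_dpoly 1) y = y\<^sup>2"
  by (simp add: flat_exp_dpoly_def power2_eq_square)

lemma poly_flat_exp_dpoly_2: "poly (flat_exp_dpoly (flat_exp_dpoly 1)) y = y\<^sup>2 * (y\<^sup>2 - 2 * y)"
  by (simp add: flat_exp_dpoly_def power2_eq_square pderiv_pCons algebra_simps)

lemma diag_bump_nonneg: "0 \<le> diag_bump d s"
  by (simp add: diag_bump_def flat_exp_def)

lemma diag_bump_eq_0: "s \<le> d \<Longrightarrow> diag_bump d s = 0"
  by (simp add: diag_bump_def flat_exp_def)

lemma diag_bump_pos: "d < s \<Longrightarrow> 0 < diag_bump d s"
  by (simp add: diag_bump_def flat_exp_def)

lemma diag_bump'_nonneg: "0 \<le> diag_bump' d s"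
  by (simp add: diag_bump'_def flat_exp_def poly_flat_exp_dpoly_1)

lemma diag_bump'_pos: "d < s \<Longrightarrow> 0 < diag_bump' d s"
  by (simp add: diag_bump'_def flat_exp_def poly_flat_exp_dpoly_1)

lemma square_le_exp: "0 \<le> y \<Longrightarrow> y\<^sup>2 \<le> exp (y::real)"
proof -
  assume y: "0 \<le> y"
  have "y \<le> 1 + y / 2 + (y / 2)\<^sup>2 / 2"
    using zero_le_power2[of "y - 2"] by (simp add: power2_eq_square algebra_simps)
  also have "\<dots> \<le> exp (y / 2)"
    using exp_lower_Taylor_quadratic[of "y / 2"] y by simp
  finally have "y\<^sup>2 \<le> (exp (y / 2))\<^sup>2"
    using y by (intro power_mono) auto
  also have "\<dots> = exp y" by (simp add: exp_double[symmetric])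
  finally show ?thesis .
qed

lemma diag_bump'_le: "diag_bump' d s \<le> 1 / 4096"
proof -
  have "flat_exp (flat_exp_dpoly 1) t \<le> 1" for t
  proof (cases "0 < t")
    case True
    have "(inverse t)\<^sup>2 \<le> exp (inverse t)"
      using True by (intro square_le_exp) simp
    then have "(inverse t)\<^sup>2 * exp (- inverse t) \<le> 1"
      by (simp add: exp_minus divide_inverse[symmetric] divide_le_eq)
    then show ?thesis using True by (simp add: flat_exp_def poly_flat_exp_dpoly_1)
  qed (simp add: flat_exp_def)
  then show ?thesis by (simp add: diag_bump'_def)
qed

lemma diag_bump''_nonneg:
  assumes "s - d \<le> 8"
  shows "0 \<le> diag_bump'' d s"
proof (cases "0 < s - d")
  case True
  define t where "t = (s - d) / 16"
  have t: "0 < t" "t \<le> 1 / 2" using True assms by (auto simp: t_def)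
  then have "2 \<le> inverse t"
    by (metis inverse_eq_divide le_imp_inverse_le inverse_inverse_eq zero_less_divide_1_iff)
  then have "0 \<le> poly (flat_exp_dpoly (flat_exp_dpoly 1)) (inverse t)"
    unfolding poly_flat_exp_dpoly_2
    using t by (intro mult_nonneg_nonneg) (auto simp: power2_eq_square intro!: mult_right_mono)
  then show ?thesis by (simp add: diag_bump''_def flat_exp_def t_def[symmetric])
qed (simp add: diag_bump''_def flat_exp_def)

definition pdiff :: "'a::euclidean_space \<times> 'a \<Rightarrow> 'a" where "pdiff y = fst y - snd y"
definition psum :: "'a::euclidean_space \<times> 'a \<Rightarrow> 'a" where "psum y = fst y + snd y"

lemma pdiff_has_derivative[derivative_intros]: "(pdiff has_derivative pdiff) (at y within s)"
  unfolding pdiff_def[abs_def] by (auto intro!: derivative_eq_intros)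

lemma psum_has_derivative[derivative_intros]: "(psum has_derivative psum) (at y within s)"
  unfolding psum_def[abs_def] by (auto intro!: derivative_eq_intros)

lemma inner_pdiff_add_inner_psum: "pdiff y \<bullet> pdiff y + psum y \<bullet> psum y = 2 * (y \<bullet> y)"
  by (cases y) (simp add: pdiff_def psum_def inner_diff inner_add inner_commute algebra_simps)

lemma diag_bump_has_derivative[derivative_intros]:
  "(g has_derivative g') (at x within s) \<Longrightarrow>
   ((\<lambda>x. diag_bump d (g x)) has_derivative (\<lambda>y. g' y * diag_bump' d (g x))) (at x within s)"
  by (rule DERIV_compose_FDERIV[OF diag_bump_has_real_derivative])

lemma diag_bump'_has_derivative[derivative_intros]:
  "(g has_derivative g') (at x within s) \<Longrightarrow>
   ((\<lambda>x. diag_bump' d (g x)) has_derivative (\<lambda>y. g' y * diag_bump'' d (g x))) (at x within s)"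
  by (rule DERIV_compose_FDERIV[OF diag_bump'_has_real_derivative])

definition diag_fun :: "real \<Rightarrow> 'a::euclidean_space \<times> 'a \<Rightarrow> real" where
  "diag_fun d y = diag_bump d (pdiff y \<bullet> pdiff y)
     + (diag_bump d (pdiff y \<bullet> pdiff y))\<^sup>2 * (psum y \<bullet> psum y)"

definition diag_fun_D :: "real \<Rightarrow> 'a::euclidean_space \<times> 'a \<Rightarrow> 'a \<times> 'a \<Rightarrow> real" where
  "diag_fun_D d y w = (let S = pdiff y \<bullet> pdiff y; h = diag_bump d S; h' = diag_bump' d S in
     2 * h' * (pdiff y \<bullet> pdiff w) + 4 * h * h' * (pdiff y \<bullet> pdiff w) * (psum y \<bullet> psum y)
     + 2 * h\<^sup>2 * (psum y \<bullet> psum w))"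

definition diag_fun_D2 :: "real \<Rightarrow> 'a::euclidean_space \<times> 'a \<Rightarrow> 'a \<times> 'a \<Rightarrow> 'a \<times> 'a \<Rightarrow> real" where
  "diag_fun_D2 d y u w = (let S = pdiff y \<bullet> pdiff y; Q = psum y \<bullet> psum y;
       h = diag_bump d S; h' = diag_bump' d S; h'' = diag_bump'' d S in
     4 * h'' * (pdiff y \<bullet> pdiff u) * (pdiff y \<bullet> pdiff w) + 2 * h' * (pdiff u \<bullet> pdiff w)
     + 8 * Q * (h'\<^sup>2 + h * h'') * (pdiff y \<bullet> pdiff u) * (pdiff y \<bullet> pdiff w)
     + 4 * h * h' * Q * (pdiff u \<bullet> pdiff w)
     + 8 * h * h' * (pdiff y \<bullet> pdiff w) * (psum y \<bullet> psum u)
     + 8 * h * h' * (psum y \<bullet> psum w) * (pdiff y \<bullet> pdiff u)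
     + 2 * h\<^sup>2 * (psum u \<bullet> psum w))"

lemma diag_fun_has_derivative: "(diag_fun d has_derivative diag_fun_D d y) (at y)"
  unfolding diag_fun_def[abs_def]
  by (rule has_derivative_eq_rhs, (rule derivative_eq_intros refl)+, rule ext)
    (simp add: diag_fun_D_def Let_def inner_commute algebra_simps power2_eq_square)

lemma diag_fun_D_has_derivative:
  "((\<lambda>y. diag_fun_D d y w) has_derivative (\<lambda>u. diag_fun_D2 d y u w)) (at y)"
  unfolding diag_fun_D_def Let_def
  by (rule has_derivative_eq_rhs, (rule derivative_eq_intros refl)+, rule ext)
    (simp add: diag_fun_D2_def Let_def inner_commute algebra_simps power2_eq_square)

lemma diag_fun_D2_commute: "diag_fun_D2 d y u w = diag_fun_D2 d y w u"
  by (simp add: diag_fun_D2_def Let_def inner_commute algebra_simps)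

text \<open>The mixed term of \<open>diag_fun_D2 d y v v\<close> is dominated by its two diagonal terms because
  \<open>h'\<close> is small; \<open>a\<close>, \<open>b\<close> stand for \<open>pdiff y \<bullet> pdiff v\<close>, \<open>psum y \<bullet> psum v\<close>.\<close>
lemma abs_mixed_term_le:
  fixes h h' a b A B S Q :: real
  assumes "0 \<le> h'" "h' \<le> 1 / 4096" "0 \<le> A" "0 \<le> B"
    and "0 \<le> S" "S \<le> 8" "0 \<le> Q" "Q \<le> 8"
    and "a\<^sup>2 \<le> S * A" "b\<^sup>2 \<le> Q * B"
  shows "\<bar>16 * h * h' * a * b\<bar> \<le> h' * A + h\<^sup>2 * B"
proof -
  have "a\<^sup>2 * b\<^sup>2 \<le> (S * A) * (Q * B)"
    using assms by (intro mult_mono) auto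
  also have "\<dots> = (S * Q) * (A * B)"
    by (simp add: mult_ac)
  also have "\<dots> \<le> 64 * (A * B)"
    using assms mult_mono[of S 8 Q 8] by (intro mult_right_mono) auto
  finally have ab: "a\<^sup>2 * b\<^sup>2 \<le> 64 * (A * B)" .
  have "\<bar>16 * h * h' * a * b\<bar>\<^sup>2 = 256 * (h\<^sup>2 * h'\<^sup>2) * (a\<^sup>2 * b\<^sup>2)"
    by (simp add: power_mult_distrib)
  also have "\<dots> \<le> 256 * (h\<^sup>2 * h'\<^sup>2) * (64 * (A * B))"
    using ab by (intro mult_left_mono) auto
  also have "\<dots> = (16384 * h') * (h' * h\<^sup>2 * A * B)"
    by (simp add: power2_eq_square)
  also have "\<dots> \<le> 4 * (h' * h\<^sup>2 * A * B)"
    using assms by (intro mult_right_mono) auto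
  also have "\<dots> \<le> (h' * A + h\<^sup>2 * B)\<^sup>2"
    using zero_le_power2[of "h' * A - h\<^sup>2 * B"] by (simp add: power2_eq_square algebra_simps)
  finally show ?thesis
    by (rule power2_le_imp_le) (use assms in simp)
qed

lemma diag_fun_D2_ge:
  assumes "pdiff y \<bullet> pdiff y < 8" "psum y \<bullet> psum y < 8" "0 < d"
  shows "diag_bump' d (pdiff y \<bullet> pdiff y) * (pdiff v \<bullet> pdiff v)
    + (diag_bump d (pdiff y \<bullet> pdiff y))\<^sup>2 * (psum v \<bullet> psum v) \<le> diag_fun_D2 d y v v"
proof -
  define S Q where "S = pdiff y \<bullet> pdiff y" and "Q = psum y \<bullet> psum y"
  define h h' h'' where "h = diag_bump d S" and "h' = diag_bump' d S" and "h'' = diag_bump'' d S"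
  define a b where "a = pdiff y \<bullet> pdiff v" and "b = psum y \<bullet> psum v"
  define A B where "A = pdiff v \<bullet> pdiff v" and "B = psum v \<bullet> psum v"
  have h: "0 \<le> h" "0 \<le> h'" "h' \<le> 1 / 4096" "0 \<le> h''"
    unfolding h_def h'_def h''_def
    by (rule diag_bump_nonneg diag_bump'_nonneg diag_bump'_le)+
      (use assms in \<open>auto simp: S_def intro!: diag_bump''_nonneg\<close>)
  have "0 \<le> S" "0 \<le> Q" "0 \<le> A" "0 \<le> B" by (simp_all add: S_def Q_def A_def B_def)
  moreover have "a\<^sup>2 \<le> S * A" "b\<^sup>2 \<le> Q * B"
    unfolding a_def b_def S_def Q_def A_def B_def by (rule Cauchy_Schwarz_ineq)+
  ultimately have mixed: "\<bar>16 * h * h' * a * b\<bar> \<le> h' * A + h\<^sup>2 * B"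
    using assms h by (intro abs_mixed_term_le) (auto simp: S_def Q_def)
  have "diag_fun_D2 d y v v = (h' * A + h\<^sup>2 * B + 16 * h * h' * a * b) + (h' * A + h\<^sup>2 * B)
      + (4 * h'' * a\<^sup>2 + 8 * Q * (h'\<^sup>2 + h * h'') * a\<^sup>2 + 4 * h * h' * Q * A)"
    by (simp add: diag_fun_D2_def Let_def S_def Q_def h_def h'_def h''_def a_def b_def A_def B_def
        power2_eq_square algebra_simps)
  moreover have "0 \<le> 4 * h'' * a\<^sup>2 + 8 * Q * (h'\<^sup>2 + h * h'') * a\<^sup>2 + 4 * h * h' * Q * A"
    using h \<open>0 \<le> Q\<close> \<open>0 \<le> A\<close> by (intro add_nonneg_nonneg mult_nonneg_nonneg) auto
  ultimately have "h' * A + h\<^sup>2 * B \<le> diag_fun_D2 d y v v"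
    using abs_le_D2[OF mixed] by linarith
  then show ?thesis by (simp only: h_def h'_def S_def A_def B_def)
qed

lemma mem_Dset_iff: "x \<in> Dset e \<longleftrightarrow> norm (pdiff x) \<le> e"
  by (cases x) (simp add: Dset_def pdiff_def)

lemma mem_Dset_sqrt_iff: "x \<in> Dset (sqrt e) \<longleftrightarrow> pdiff x \<bullet> pdiff x \<le> e"
  by (simp add: mem_Dset_iff norm_eq_sqrt_inner)

lemma smooth_expr_inner_self: "smooth_expr (\<lambda>x::'a::euclidean_space. x \<bullet> x)"
  using smooth_expr.inner_square[of "\<lambda>x. x"] by (simp add: bounded_linear_ident)

lemma smooth_expr_inner_pdiff: "smooth_expr (\<lambda>x::'a::euclidean_space \<times> 'a. pdiff x \<bullet> pdiff x)"
  by (rule smooth_expr_cong[OF smooth_expr.inner_square[of "\<lambda>x. (pdiff x, 0)"]])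
    (auto simp: pdiff_def intro!: bounded_linear_intros bounded_linear_Pair bounded_linear_fst
      bounded_linear_snd)

lemma smooth_expr_inner_psum: "smooth_expr (\<lambda>x::'a::euclidean_space \<times> 'a. psum x \<bullet> psum x)"
  by (rule smooth_expr_cong[OF smooth_expr.inner_square[of "\<lambda>x. (psum x, 0)"]])
    (auto simp: psum_def intro!: bounded_linear_intros bounded_linear_Pair bounded_linear_fst
      bounded_linear_snd)

lemma smooth_expr_diag_bump:
  assumes "smooth_expr g"
  shows "smooth_expr (\<lambda>x. diag_bump d (g x))"
proof -
  have "smooth_expr (\<lambda>x. (1 / 256) * flat_exp 1 ((1 / 16) * (g x - d)))"
    by (intro smooth_expr_cmult smooth_expr.flat_exp smooth_expr_diff smooth_expr.const assms)
  then show ?thesis by (rule smooth_expr_cong) (simp add: diag_bump_def)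
qed

lemma smooth_expr_diag_fun: "smooth_expr (diag_fun d)"
  unfolding diag_fun_def power2_eq_square
  by (intro smooth_expr.add smooth_expr.mult smooth_expr_diag_bump smooth_expr_inner_pdiff
      smooth_expr_inner_psum)

definition cutoff :: "real \<Rightarrow> real \<Rightarrow> real" where
  "cutoff T t = flat_exp 1 (T - t) / (flat_exp 1 (T - t) + flat_exp 1 (t - 4))"

lemma cutoff_denominator_pos: "4 < T \<Longrightarrow> 0 < flat_exp 1 (T - t) + flat_exp 1 (t - 4)"
  by (cases "t < T") (auto simp: flat_exp_def add_pos_nonneg add_nonneg_pos)

lemma cutoff_eq_1: "t \<le> 4 \<Longrightarrow> t < T \<Longrightarrow> cutoff T t = 1"
  by (simp add: cutoff_def flat_exp_def)

lemma cutoff_eq_0: "T \<le> t \<Longrightarrow> cutoff T t = 0"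
  by (simp add: cutoff_def flat_exp_def)

definition bump_fun :: "real \<Rightarrow> real \<Rightarrow> 'a::euclidean_space \<times> 'a \<Rightarrow> real" where
  "bump_fun d T x = cutoff T (x \<bullet> x) * diag_fun d x"

lemma smooth_fun_bump_fun: "4 < T \<Longrightarrow> smooth_fun (bump_fun d T)"
  unfolding bump_fun_def[abs_def] cutoff_def
  by (intro smooth_fun_if_smooth_expr smooth_expr.mult smooth_expr_divide smooth_expr.flat_exp
      smooth_expr_diff smooth_expr.const smooth_expr_inner_self smooth_expr_diag_fun
      smooth_expr.add cutoff_denominator_pos)

lemma bump_fun_compact_support: "\<exists>S. compact S \<and> (\<forall>x. x \<notin> S \<longrightarrow> bump_fun d T x = 0)"
  by (intro exI[of _ "cball 0 (sqrt T)"])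
    (auto simp: bump_fun_def cutoff_eq_0 norm_eq_sqrt_inner)

lemma open_inner_pdiff_less: "open {x :: 'a::euclidean_space \<times> 'a. pdiff x \<bullet> pdiff x < d}"
  by (rule open_Collect_less) (auto simp: pdiff_def intro!: continuous_intros)

lemma bump_fun_eq_0_if_pdiff_small: "pdiff x \<bullet> pdiff x \<le> d \<Longrightarrow> bump_fun d T x = 0"
  by (simp add: bump_fun_def diag_fun_def diag_bump_eq_0)

lemma bump_fun_vanishes_near_diagonal:
  assumes "0 < d"
  shows "\<exists>U. open U \<and> Dset 0 \<subseteq> U \<and> (\<forall>x\<in>U. bump_fun d T x = 0)"
  using assms open_inner_pdiff_less[of d]
  by (intro exI[of _ "{x. pdiff x \<bullet> pdiff x < d}"])
    (auto simp: mem_Dset_iff bump_fun_eq_0_if_pdiff_small)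

lemma hess_ge_bump_fun_0:
  assumes "pdiff x \<bullet> pdiff x < d \<or> T < x \<bullet> x"
  shows "hess_ge (bump_fun d T) x 0"
proof (rule hess_ge_if_vanishing_near)
  show "open ({x. pdiff x \<bullet> pdiff x < d} \<union> {x. T < x \<bullet> x})"
    by (intro open_Un open_inner_pdiff_less open_Collect_less) (auto intro!: continuous_intros)
  show "bump_fun d T y = 0" if "y \<in> {x. pdiff x \<bullet> pdiff x < d} \<union> {x. T < x \<bullet> x}" for y
    using that bump_fun_eq_0_if_pdiff_small[of y d T] by (auto simp: bump_fun_def cutoff_eq_0)
qed (use assms in auto)

definition diag_modulus :: "real \<Rightarrow> real \<Rightarrow> real" where
  "diag_modulus d S = 2 * min (diag_bump' d S) ((diag_bump d S)\<^sup>2)"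

lemma diag_modulus_nonneg: "0 \<le> diag_modulus d S"
  by (simp add: diag_modulus_def diag_bump'_nonneg)

lemma diag_modulus_pos: "d < S \<Longrightarrow> 0 < diag_modulus d S"
  using diag_bump_pos[of d S] diag_bump'_pos[of d S] by (simp add: diag_modulus_def)

lemma continuous_on_diag_modulus: "continuous_on UNIV (diag_modulus d)"
  unfolding diag_modulus_def[abs_def]
  by (intro continuous_intros continuous_on_diag_bump continuous_on_diag_bump')

lemma hess_ge_diag_fun:
  assumes "0 < d" "pdiff x \<bullet> pdiff x < 8" "psum x \<bullet> psum x < 8"
  shows "hess_ge (diag_fun d) x (diag_modulus d (pdiff x \<bullet> pdiff x))"
  unfolding hess_ge_def
proof
  fix v :: "'a \<times> 'a"
  define S where "S = pdiff x \<bullet> pdiff x"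
  have "diag_modulus d S * (norm v)\<^sup>2
      = min (diag_bump' d S) ((diag_bump d S)\<^sup>2) * (pdiff v \<bullet> pdiff v + psum v \<bullet> psum v)"
    by (simp add: diag_modulus_def inner_pdiff_add_inner_psum power2_norm_eq_inner)
  also have "\<dots> \<le> diag_bump' d S * (pdiff v \<bullet> pdiff v) + (diag_bump d S)\<^sup>2 * (psum v \<bullet> psum v)"
    by (simp add: distrib_left add_mono mult_right_mono)
  also have "\<dots> \<le> diag_fun_D2 d x v v"
    using assms by (simp add: S_def diag_fun_D2_ge)
  also have "\<dots> = (\<Sum>i\<in>Basis. \<Sum>j\<in>Basis. (v \<bullet> i) * hess_entry (diag_fun d) x i j * (v \<bullet> j))"
    by (rule hess_quadratic_form_eq[OF diag_fun_has_derivative diag_fun_D_has_derivative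
          diag_fun_D2_commute, symmetric])
  finally show "diag_modulus d (pdiff x \<bullet> pdiff x) * (norm v)\<^sup>2
      \<le> (\<Sum>i\<in>Basis. \<Sum>j\<in>Basis. (v \<bullet> i) * hess_entry (diag_fun d) x i j * (v \<bullet> j))"
    by (simp only: S_def)
qed

lemma inner_self_less_4: "norm (x :: 'a::real_inner) < 2 \<Longrightarrow> x \<bullet> x < 4"
  using power_strict_mono[of "norm x" 2 2] by (simp add: power2_norm_eq_inner)

lemma hess_entry_bump_fun_ball:
  assumes "4 < T" "norm x < 2"
  shows "hess_entry (bump_fun d T) x i j = hess_entry (diag_fun d) x i j"
proof (rule hess_entry_cong_open[of "ball 0 2"])
  show "bump_fun d T y = diag_fun d y" if "y \<in> ball 0 2" for y :: "'a \<times> 'a"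
    using inner_self_less_4[of y] that assms by (simp add: bump_fun_def cutoff_eq_1)
qed (use assms in auto)

lemma hess_ge_bump_fun_ball:
  assumes "0 < d" "4 < T" "norm x < 2"
  shows "hess_ge (bump_fun d T) x (diag_modulus d (pdiff x \<bullet> pdiff x))"
proof -
  have "pdiff x \<bullet> pdiff x < 8" "psum x \<bullet> psum x < 8"
    using inner_pdiff_add_inner_psum[of x] inner_self_less_4[OF assms(3)]
      inner_ge_zero[of "pdiff x"] inner_ge_zero[of "psum x"] by linarith+
  then show ?thesis
    using hess_ge_diag_fun[OF assms(1)] hess_entry_bump_fun_ball[OF assms(2,3)]
    by (simp add: hess_ge_def)
qed

lemma compact_Cann: "compact (Cann r r' :: 'a::euclidean_space set)"
proof -
  have "Cann r r' = cball (0 :: 'a) r' - ball 0 r"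
    by (auto simp: Cann_def)
  then show ?thesis by (simp add: compact_diff)
qed

lemma hess_ge_bump_fun_indicator:
  fixes K :: "('a::euclidean_space \<times> 'a) set"
  assumes "0 < d" "4 < T" "compact K"
    and K: "\<And>x. x \<in> K \<Longrightarrow> d < pdiff x \<bullet> pdiff x \<and> x \<bullet> x < T"
  obtains c1 c2 where "0 < c1" "0 < c2"
    "\<And>x. hess_ge (bump_fun d T) x
       (c1 * indicator K x - c2 * indicator (Cann 2 (sqrt T) - Dset (sqrt (d / 2))) x)"
proof -
  have "continuous_on K (\<lambda>x. diag_modulus d (pdiff x \<bullet> pdiff x))"
    by (rule continuous_on_compose2[OF continuous_on_diag_modulus])
      (auto simp: pdiff_def intro!: continuous_intros)
  moreover have "0 < diag_modulus d (pdiff x \<bullet> pdiff x)" if "x \<in> K" for x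
    using K[OF that] by (simp add: diag_modulus_pos)
  ultimately obtain c1
    where c1: "0 < c1" "\<And>x. x \<in> K \<Longrightarrow> c1 \<le> diag_modulus d (pdiff x \<bullet> pdiff x)"
    using continuous_pos_on_compact_ge[OF assms(3)] by blast
  obtain M where M: "\<And>x :: 'a \<times> 'a. x \<in> Cann 2 (sqrt T) \<Longrightarrow> hess_ge (bump_fun d T) x (- M)"
    using smooth_fun_hess_ge_on_compact[OF smooth_fun_bump_fun[OF assms(2), of d]
        compact_Cann[of 2 "sqrt T"]] by blast
  define c2 where "c2 = \<bar>M\<bar> + c1 + 1"
  have "hess_ge (bump_fun d T) x
      (c1 * indicator K x - c2 * indicator (Cann 2 (sqrt T) - Dset (sqrt (d / 2))) x)" for x
  proof -
    consider "norm x < 2" | "x \<in> Cann 2 (sqrt T)" "x \<in> Dset (sqrt (d / 2))"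
      | "x \<in> Cann 2 (sqrt T) - Dset (sqrt (d / 2))" | "sqrt T < norm x"
      by (force simp: Cann_def)
    then show ?thesis
    proof cases
      case 1
      then show ?thesis
        using c1(2)[of x] diag_modulus_nonneg[of d "pdiff x \<bullet> pdiff x"]
        by (intro hess_ge_mono[OF hess_ge_bump_fun_ball[OF assms(1,2) 1]])
          (auto simp: Cann_def indicator_def)
    next
      case 2
      then have "pdiff x \<bullet> pdiff x < d"
        using assms(1) by (simp add: mem_Dset_sqrt_iff)
      then show ?thesis
        using K[of x] 2 by (intro hess_ge_mono[OF hess_ge_bump_fun_0]) (auto simp: indicator_def)
    next
      case 3
      then have "hess_ge (bump_fun d T) x (- M)"
        by (simp add: M)
      then show ?thesis
        by (rule hess_ge_mono) (use 3 c1(1) in \<open>auto simp: c2_def indicator_def\<close>)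
    next
      case 4
      then have "T < x \<bullet> x"
        by (simp add: norm_eq_sqrt_inner)
      then show ?thesis
        using K[of x] 4
        by (intro hess_ge_mono[OF hess_ge_bump_fun_0]) (auto simp: Cann_def indicator_def)
    qed
  qed
  moreover have "0 < c2" using c1(1) by (simp add: c2_def)
  ultimately show thesis using that c1(1) by blast
qed

lemma compact_off_diagonal_bounds:
  fixes K :: "('a::euclidean_space \<times> 'a) set"
  assumes "compact K" "K \<inter> Dset 0 = {}"
  obtains d T where "0 < d" "4 < T" "\<And>x. x \<in> K \<Longrightarrow> d < pdiff x \<bullet> pdiff x \<and> x \<bullet> x < T"
proof -
  have "continuous_on K (\<lambda>x. pdiff x \<bullet> pdiff x)"
    by (auto simp: pdiff_def intro!: continuous_intros)
  moreover have "0 < pdiff x \<bullet> pdiff x" if "x \<in> K" for x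
    using assms(2) that by (auto simp: mem_Dset_iff)
  ultimately obtain m where m: "0 < m" "\<And>x. x \<in> K \<Longrightarrow> m \<le> pdiff x \<bullet> pdiff x"
    using continuous_pos_on_compact_ge[OF assms(1)] by blast
  obtain B where B: "\<And>x. x \<in> K \<Longrightarrow> norm x \<le> B"
    using compact_imp_bounded[OF assms(1)] unfolding bounded_iff by blast
  have "m / 2 < pdiff x \<bullet> pdiff x \<and> x \<bullet> x < B\<^sup>2 + 5" if "x \<in> K" for x
  proof -
    have "(norm x)\<^sup>2 \<le> B\<^sup>2"
      using B[OF that] by (rule power_mono) simp
    then show ?thesis
      using m(1) m(2)[OF that] by (simp add: power2_norm_eq_inner)
  qed
  moreover have "0 < m / 2" "4 < B\<^sup>2 + 5"
    using m(1) by (simp_all add: add_pos_nonneg)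
  ultimately show thesis using that by blast
qed

theorem lemma5p3:
  fixes K :: "((real^'d) \<times> (real^'d)) set"
  assumes "compact K" and "K \<inter> Dset 0 = {}"
  shows "\<exists>r r' c1 c2 \<epsilon>. sqrt 2 < r \<and> r < r' \<and> c1 > 0 \<and> c2 > 0 \<and> \<epsilon> > 0 \<and>
     (\<exists>R :: (real^'d) \<times> (real^'d) \<Rightarrow> real.
        smooth_fun R \<and>
        (\<exists>S. compact S \<and> (\<forall>x. x \<notin> S \<longrightarrow> R x = 0)) \<and>
        (\<exists>U. open U \<and> Dset 0 \<subseteq> U \<and> (\<forall>x\<in>U. R x = 0)) \<and>
        (\<forall>x. hess_ge R x (c1 * indicator K x - c2 * indicator (Cann r r' - Dset \<epsilon>) x)))"
proof -
  obtain d T where d: "0 < d" and T: "4 < T"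
    and K: "\<And>x. x \<in> K \<Longrightarrow> d < pdiff x \<bullet> pdiff x \<and> x \<bullet> x < T"
    using compact_off_diagonal_bounds[OF assms] by blast
  define R :: "(real^'d) \<times> (real^'d) \<Rightarrow> real" where "R = bump_fun d T"
  obtain c1 c2 where "0 < c1" "0 < c2" "\<And>x. hess_ge R x
      (c1 * indicator K x - c2 * indicator (Cann 2 (sqrt T) - Dset (sqrt (d / 2))) x)"
    using hess_ge_bump_fun_indicator[OF d T assms(1) K] unfolding R_def by blast
  moreover have "sqrt 2 < (2::real)" "2 < sqrt T" "0 < sqrt (d / 2)"
    using d T real_less_rsqrt[of 2 T] by (auto simp: real_less_lsqrt)
  moreover have "smooth_fun R" "\<exists>S. compact S \<and> (\<forall>x. x \<notin> S \<longrightarrow> R x = 0)"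
    "\<exists>U. open U \<and> Dset 0 \<subseteq> U \<and> (\<forall>x\<in>U. R x = 0)"
    unfolding R_def using smooth_fun_bump_fun[OF T] bump_fun_compact_support[of d T]
      bump_fun_vanishes_near_diagonal[OF d] T by auto
  ultimately show ?thesis by blast
qed

end
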